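(* Let $\alpha=(a_1,\dots,a_w)$ have $m$ nonempty horizontal lists, and let $a_i\in\mathbb{L}^m_\alpha$. Let $(a_{i_{m-1}},\dots,a_{i_0})$, with $a_{i_0}=a_i$, be any increasing subsequence of $\alpha$ of length $m$ ending at $a_i$. Then $$\mathrm{pos}(lm^{m-1}_\alpha(a_i))\le i_{m-1}\le \mathrm{pos}(un^{m-1}_\alpha(a_i)).$$ Consequently, among the longest increasing subsequences ending at $a_i$, maximum width is attained by one starting at $lm^{m-1}_\alpha(a_i)$, and minimum width by one starting at $un^{m-1}_\alpha(a_i)$.
   Context: Let $\alpha=(a_1,\dots,a_w)$ be a finite sequence of real numbers, with items identified by their positions; $\mathrm{pos}(a_j)=j$. Increasing subsequences are non-strict. $a_j$ is compatible with $a_i$ if $j<i$ and $a_j\le a_i$. $RL_\alpha(a)$ is the maximum length of an increasing subsequence ending at $a$. $a_j$ is a predecessor of $a_i$ if it is compatible with $a_i$ and $RL_\alpha(a_j)=RL_\alpha(a_i)-1$. The horizontal list $\mathbb{L}^t_\alpha$ is the list of items with rising length $t$, ordered by position. The up neighbor $un_\alpha(a_i)$ is the item $a_j$ with the largest $j<i$ and $RL_\alpha(a_j)=RL_\alpha(a_i)-1$. The leftmost child $lm_\alpha(a_i)$ is the predecessor of $a_i$ with smallest position. Iterates are defined by $f^0(a)=a$ and $f^k=f\circ f^{k-1}$. The width of a subsequence $(a_{j_1},\dots,a_{j_k})$ is $j_k-j_1$. *)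

theory Defs
  imports Complex_Main
begin

text \<open>A sequence alpha = (a_1,...,a_w) is a function a :: nat => real together
  with its length w; items are identified by positions 1..w.\<close>

definition inc_subseq :: "(nat \<Rightarrow> real) \<Rightarrow> nat \<Rightarrow> nat list \<Rightarrow> bool" where
  "inc_subseq a w js \<longleftrightarrow> js \<noteq> [] \<and> set js \<subseteq> {1..w} \<and> sorted_wrt (<) js
     \<and> (\<forall>k. Suc k < length js \<longrightarrow> a (js ! k) \<le> a (js ! Suc k))"

definition RL :: "(nat \<Rightarrow> real) \<Rightarrow> nat \<Rightarrow> nat \<Rightarrow> nat" where
  "RL a w i = Max {length js | js. inc_subseq a w js \<and> last js = i}"

definition compatible :: "(nat \<Rightarrow> real) \<Rightarrow> nat \<Rightarrow> nat \<Rightarrow> bool" where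
  "compatible a j i \<longleftrightarrow> j < i \<and> a j \<le> a i"

definition predecessor :: "(nat \<Rightarrow> real) \<Rightarrow> nat \<Rightarrow> nat \<Rightarrow> nat \<Rightarrow> bool" where
  "predecessor a w j i \<longleftrightarrow> j \<in> {1..w} \<and> compatible a j i \<and> RL a w j + 1 = RL a w i"

definition hlist :: "(nat \<Rightarrow> real) \<Rightarrow> nat \<Rightarrow> nat \<Rightarrow> nat list" where
  "hlist a w t = filter (\<lambda>j. RL a w j = t) [1..<Suc w]"

definition un :: "(nat \<Rightarrow> real) \<Rightarrow> nat \<Rightarrow> nat \<Rightarrow> nat" where
  "un a w i = (GREATEST j. j \<in> {1..w} \<and> j < i \<and> RL a w j + 1 = RL a w i)"

definition lm :: "(nat \<Rightarrow> real) \<Rightarrow> nat \<Rightarrow> nat \<Rightarrow> nat" where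
  "lm a w i = (LEAST j. predecessor a w j i)"

definition width :: "nat list \<Rightarrow> nat" where
  "width js = last js - hd js"

end

theory Submission
  imports Defs
begin

text \<open>List a longest increasing subsequence ending at a_i backwards as b_0 = i, b_1, ...;
  then RL(b_k) = RL(i) - k, so each b_(k+1) is a predecessor of b_k. Items of equal rising
  length strictly decrease in value from left to right. By induction on k, if lm^k(i) \<le> b_k then
  the value of b_k is at most that of lm^k(i), so b_(k+1) is a predecessor of lm^k(i) unless it lies
  to its right; either way lm^(k+1)(i) \<le> b_(k+1). Dually b_(k+1) \<le> un^(k+1)(i), as un picks the
  rightmost item of the next lower level to the left. Since iterating lm or un from i again yields
  longest increasing subsequences, both bounds are attained, which gives the extreme widths.\<close>

context
  fixes a :: "nat \<Rightarrow> real" and w :: nat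
begin

lemma inc_subseq_iff_successively:
  "inc_subseq a w js \<longleftrightarrow> js \<noteq> [] \<and> set js \<subseteq> {1..w} \<and> successively (compatible a) js"
proof -
  have "sorted_wrt (<) js \<longleftrightarrow> successively (<) js"
    by (simp add: successively_conv_sorted_wrt transp_on_less)
  then show ?thesis
    unfolding inc_subseq_def compatible_def successively_conv_nth by auto
qed

lemma inc_subseq_rev_iff:
  "inc_subseq a w (rev bs) \<longleftrightarrow>
     bs \<noteq> [] \<and> set bs \<subseteq> {1..w} \<and> successively (\<lambda>x y. compatible a y x) bs"
  by (simp add: inc_subseq_iff_successively)

lemma inc_subseq_length_le: "inc_subseq a w js \<Longrightarrow> length js \<le> w"
proof -
  assume "inc_subseq a w js"
  then have "distinct js" and "set js \<subseteq> {1..w}"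
    unfolding inc_subseq_def by (auto simp: strict_sorted_iff)
  then show ?thesis
    using card_mono[of "{1..w}" "set js"] by (simp add: distinct_card)
qed

lemma finite_inc_subseq_lengths: "finite {length js | js. inc_subseq a w js \<and> last js = j}"
  by (rule finite_subset[of _ "{..w}"]) (auto dest: inc_subseq_length_le)

lemma length_le_RL: "inc_subseq a w js \<Longrightarrow> length js \<le> RL a w (last js)"
  unfolding RL_def by (rule Max_ge[OF finite_inc_subseq_lengths]) auto

lemma longest_inc_subseq_ending_at:
  assumes "j \<in> {1..w}"
  obtains bs where "inc_subseq a w (rev bs)" "hd bs = j" "length bs = RL a w j"
proof -
  have "inc_subseq a w [j]"
    using assms by (simp add: inc_subseq_def)
  then have "{length js | js. inc_subseq a w js \<and> last js = j} \<noteq> {}"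
    by force
  from Max_in[OF finite_inc_subseq_lengths this] obtain js
    where "inc_subseq a w js" "last js = j" "length js = RL a w j"
    unfolding RL_def by auto
  with that[of "rev js"] show ?thesis
    by (simp add: inc_subseq_def hd_rev)
qed

lemma RL_ge_1: "j \<in> {1..w} \<Longrightarrow> 1 \<le> RL a w j"
  by (metis longest_inc_subseq_ending_at inc_subseq_rev_iff length_greater_0_conv less_eq_Suc_le One_nat_def)

lemma RL_less_if_compatible:
  assumes "i \<in> {1..w}" "j \<in> {1..w}" "compatible a j i"
  shows "RL a w j < RL a w i"
proof -
  obtain bs where bs: "inc_subseq a w (rev bs)" "hd bs = j" "length bs = RL a w j"
    using longest_inc_subseq_ending_at[OF assms(2)] .
  then have "inc_subseq a w (rev (i # bs))"
    using assms unfolding inc_subseq_rev_iff by (auto simp: successively_Cons)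
  from length_le_RL[OF this] show ?thesis
    using bs(3) by simp
qed

lemma horizontal_list_decreasing:
  assumes "i \<in> {1..w}" "j \<in> {1..w}" "j < i" "RL a w j = RL a w i"
  shows "a i < a j"
  using RL_less_if_compatible[OF assms(1,2)] assms(3,4) by (force simp: compatible_def)

lemma inc_subseq_rev_nthD:
  assumes "inc_subseq a w (rev bs)" "k < length bs"
  shows "bs ! k \<in> {1..w}" and "Suc k < length bs \<Longrightarrow> compatible a (bs ! Suc k) (bs ! k)"
  using assms unfolding inc_subseq_rev_iff by (auto dest: successively_nth intro: nth_mem)

lemma RL_along_descending_chain:
  assumes "inc_subseq a w (rev bs)" "k < length bs"
  shows "RL a w (bs ! k) + k \<le> RL a w (hd bs)"
  using assms(2)
proof (induction k)
  case 0
  then show ?case by (simp add: hd_conv_nth)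
next
  case (Suc k)
  have "RL a w (bs ! Suc k) < RL a w (bs ! k)"
    using Suc.prems by (intro RL_less_if_compatible inc_subseq_rev_nthD[OF assms(1)]) simp_all
  then show ?case
    using Suc by simp
qed

lemma RL_along_longest:
  assumes "inc_subseq a w (rev bs)" "length bs = RL a w (hd bs)" "k < length bs"
  shows "RL a w (bs ! k) + k = length bs"
proof -
  have "inc_subseq a w (rev (drop k bs))"
    using assms(1,3) successively_append_iff[of _ "take k bs" "drop k bs"]
    by (auto simp: inc_subseq_rev_iff dest: in_set_dropD)
  then have "length bs - k \<le> RL a w (bs ! k)"
    using length_le_RL[of "rev (drop k bs)"] assms(3) by (simp add: last_rev hd_drop_conv_nth)
  then show ?thesis
    using RL_along_descending_chain[OF assms(1,3)] assms(2) by simp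
qed

lemma predecessor_exists:
  assumes "x \<in> {1..w}" "2 \<le> RL a w x"
  shows "\<exists>q. predecessor a w q x"
proof -
  obtain bs where bs: "inc_subseq a w (rev bs)" "hd bs = x" "length bs = RL a w x"
    using longest_inc_subseq_ending_at[OF assms(1)] .
  have len: "1 < length bs"
    using bs(3) assms(2) by simp
  then have "bs ! 0 = x"
    using bs(2) by (cases bs) auto
  with len have "predecessor a w (bs ! 1) x"
    using inc_subseq_rev_nthD[OF bs(1)] RL_along_longest[OF bs(1), of 1] bs(2,3)
    by (auto simp: predecessor_def)
  then show ?thesis ..
qed

lemma lm_predecessor: "x \<in> {1..w} \<Longrightarrow> 2 \<le> RL a w x \<Longrightarrow> predecessor a w (lm a w x) x"
  unfolding lm_def by (metis predecessor_exists LeastI)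

lemma lm_le: "predecessor a w q x \<Longrightarrow> lm a w x \<le> q"
  unfolding lm_def by (rule Least_le)

lemma un_lower_level:
  assumes "x \<in> {1..w}" "2 \<le> RL a w x"
  shows "un a w x \<in> {1..w} \<and> un a w x < x \<and> RL a w (un a w x) + 1 = RL a w x"
proof -
  obtain q where "predecessor a w q x"
    using predecessor_exists[OF assms] ..
  then have "q \<in> {1..w} \<and> q < x \<and> RL a w q + 1 = RL a w x"
    by (simp add: predecessor_def compatible_def)
  then show ?thesis
    unfolding un_def by (rule GreatestI_nat[where b = x]) simp
qed

lemma le_un:
  "q \<in> {1..w} \<Longrightarrow> q < x \<Longrightarrow> RL a w q + 1 = RL a w x \<Longrightarrow> q \<le> un a w x"
  unfolding un_def by (rule Greatest_le_nat[where b = x]) simp_all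

lemma un_predecessor:
  assumes "x \<in> {1..w}" "2 \<le> RL a w x"
  shows "predecessor a w (un a w x) x"
proof -
  obtain q where q: "predecessor a w q x"
    using predecessor_exists[OF assms] ..
  then have "q \<le> un a w x"
    by (intro le_un) (simp_all add: predecessor_def compatible_def)
  moreover note u = un_lower_level[OF assms]
  \<comment> \<open>q and un x lie on one horizontal list, so a (un x) \<le> a q \<le> a x.\<close>
  ultimately have "a (un a w x) \<le> a q"
    using q horizontal_list_decreasing[of "un a w x" q]
    by (cases "q = un a w x") (auto simp: predecessor_def)
  with q u show ?thesis
    by (auto simp: predecessor_def compatible_def)
qed

lemma RL_iterate_predecessor:
  assumes f: "\<And>x. x \<in> {1..w} \<Longrightarrow> 2 \<le> RL a w x \<Longrightarrow> predecessor a w (f x) x"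
    and i: "i \<in> {1..w}"
  shows "k < RL a w i \<Longrightarrow> (f ^^ k) i \<in> {1..w} \<and> RL a w ((f ^^ k) i) + k = RL a w i"
proof (induction k)
  case 0
  then show ?case using i by simp
next
  case (Suc k)
  then have "predecessor a w (f ((f ^^ k) i)) ((f ^^ k) i)"
    by (intro f) auto
  with Suc show ?case
    by (auto simp: predecessor_def)
qed

lemma longest_inc_subseq_from_iterate:
  assumes f: "\<And>x. x \<in> {1..w} \<Longrightarrow> 2 \<le> RL a w x \<Longrightarrow> predecessor a w (f x) x"
    and i: "i \<in> {1..w}"
  obtains js where "inc_subseq a w js" "length js = RL a w i" "last js = i"
    "hd js = (f ^^ (RL a w i - 1)) i"
proof -
  define cs where "cs = map (\<lambda>k. (f ^^ k) i) [0..<RL a w i]"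
  note iter = RL_iterate_predecessor[OF f i]
  have step: "compatible a (f ((f ^^ k) i)) ((f ^^ k) i)" if "Suc k < RL a w i" for k
  proof -
    have "predecessor a w (f ((f ^^ k) i)) ((f ^^ k) i)"
      using iter[of k] that by (intro f) auto
    then show ?thesis
      by (simp add: predecessor_def)
  qed
  have "successively (\<lambda>x y. compatible a y x) cs"
    unfolding successively_conv_nth cs_def using step by simp
  moreover have "cs \<noteq> []" "set cs \<subseteq> {1..w}"
    using RL_ge_1[OF i] iter unfolding cs_def by force+
  ultimately have "inc_subseq a w (rev cs)"
    by (simp add: inc_subseq_rev_iff)
  moreover have "hd cs = i" "last cs = (f ^^ (RL a w i - 1)) i"
    using RL_ge_1[OF i] unfolding cs_def by (simp_all add: hd_map last_map)
  ultimately show ?thesis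
    using that[of "rev cs"] by (simp add: cs_def hd_rev last_rev)
qed

lemma lm_iterate_le_longest:
  assumes bs: "inc_subseq a w (rev bs)" "length bs = RL a w (hd bs)"
  shows "k < length bs \<Longrightarrow> (lm a w ^^ k) (hd bs) \<le> bs ! k"
proof (induction k)
  case 0
  then show ?case by (simp add: hd_conv_nth)
next
  case (Suc k)
  let ?x = "(lm a w ^^ k) (hd bs)"
  have "hd bs \<in> {1..w}"
    using bs(1) by (metis inc_subseq_rev_iff hd_in_set subsetD)
  then have x: "?x \<in> {1..w}" "RL a w ?x + k = length bs"
    using RL_iterate_predecessor[OF lm_predecessor, of "hd bs" k] Suc.prems bs(2) by auto
  have k: "bs ! k \<in> {1..w}" "bs ! Suc k \<in> {1..w}" "compatible a (bs ! Suc k) (bs ! k)"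
    using inc_subseq_rev_nthD[OF bs(1)] Suc.prems by simp_all
  have "RL a w (bs ! k) = RL a w ?x"
    using RL_along_longest[OF bs, of k] x(2) Suc.prems by simp
  \<comment> \<open>?x and bs ! k lie on one horizontal list, so the earlier of them carries the larger value.\<close>
  then have "a (bs ! k) \<le> a ?x"
    using Suc horizontal_list_decreasing[OF k(1) x(1)] by fastforce
  then have "predecessor a w (bs ! Suc k) ?x" if "bs ! Suc k < ?x"
    using that k RL_along_longest[OF bs, of "Suc k"] x(2) Suc.prems
    by (auto simp: predecessor_def compatible_def)
  moreover have "lm a w ?x < ?x"
    using lm_predecessor[OF x(1)] x(2) Suc.prems by (simp add: predecessor_def compatible_def)
  ultimately show ?case
    using lm_le by (cases "bs ! Suc k < ?x") force+
qed

lemma longest_le_un_iterate: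
  assumes bs: "inc_subseq a w (rev bs)" "length bs = RL a w (hd bs)"
  shows "k < length bs \<Longrightarrow> bs ! k \<le> (un a w ^^ k) (hd bs)"
proof (induction k)
  case 0
  then show ?case by (simp add: hd_conv_nth)
next
  case (Suc k)
  let ?y = "(un a w ^^ k) (hd bs)"
  have "hd bs \<in> {1..w}"
    using bs(1) by (metis inc_subseq_rev_iff hd_in_set subsetD)
  then have y: "?y \<in> {1..w}" "RL a w ?y + k = length bs"
    using RL_iterate_predecessor[OF un_predecessor, of "hd bs" k] Suc.prems bs(2) by auto
  have "bs ! Suc k \<in> {1..w}" "bs ! Suc k < ?y" "RL a w (bs ! Suc k) + 1 = RL a w ?y"
    using inc_subseq_rev_nthD[OF bs(1), of k] inc_subseq_rev_nthD[OF bs(1), of "Suc k"]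
      RL_along_longest[OF bs, of "Suc k"] Suc y(2)
    by (auto simp: compatible_def)
  then show ?case
    by (simp add: le_un)
qed

lemma longest_inc_subseq_hd_bounds:
  assumes "inc_subseq a w js" "length js = RL a w (last js)"
  shows "(lm a w ^^ (length js - 1)) (last js) \<le> hd js \<and> hd js \<le> (un a w ^^ (length js - 1)) (last js)"
proof -
  have bs: "inc_subseq a w (rev (rev js))" "length (rev js) = RL a w (hd (rev js))"
    using assms by (simp_all add: hd_rev)
  have "js \<noteq> []"
    using assms(1) by (simp add: inc_subseq_def)
  then have "rev js ! (length js - 1) = hd js"
    by (simp add: rev_nth hd_conv_nth)
  then show ?thesis
    using lm_iterate_le_longest[OF bs, of "length js - 1"]
      longest_le_un_iterate[OF bs, of "length js - 1"] \<open>js \<noteq> []\<close>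
    by (simp add: hd_rev)
qed

end

theorem mainTheorem11:
  fixes a :: "nat \<Rightarrow> real" and w m i :: nat
  assumes "card {t. hlist a w t \<noteq> []} = m"
    and "i \<in> set (hlist a w m)"
  shows "(\<forall>js. inc_subseq a w js \<and> length js = m \<and> last js = i \<longrightarrow>
            (lm a w ^^ (m - 1)) i \<le> hd js \<and> hd js \<le> (un a w ^^ (m - 1)) i)
    \<and> (\<exists>js. inc_subseq a w js \<and> length js = m \<and> last js = i \<and>
            hd js = (lm a w ^^ (m - 1)) i \<and>
            (\<forall>ks. inc_subseq a w ks \<and> length ks = m \<and> last ks = i \<longrightarrow> width ks \<le> width js))
    \<and> (\<exists>js. inc_subseq a w js \<and> length js = m \<and> last js = i \<and>
            hd js = (un a w ^^ (m - 1)) i \<and>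
            (\<forall>ks. inc_subseq a w ks \<and> length ks = m \<and> last ks = i \<longrightarrow> width js \<le> width ks))"
proof -
  have i: "i \<in> {1..w}" and m: "RL a w i = m"
    using assms(2) by (auto simp: hlist_def)
  have bounds: "(lm a w ^^ (m - 1)) i \<le> hd js \<and> hd js \<le> (un a w ^^ (m - 1)) i"
    if "inc_subseq a w js" "length js = m" "last js = i" for js
    using longest_inc_subseq_hd_bounds[of a w js] that m by simp
  obtain jl where jl: "inc_subseq a w jl" "length jl = m" "last jl = i" "hd jl = (lm a w ^^ (m - 1)) i"
    using longest_inc_subseq_from_iterate[OF lm_predecessor[where a = a] i, unfolded m] .
  obtain ju where ju: "inc_subseq a w ju" "length ju = m" "last ju = i" "hd ju = (un a w ^^ (m - 1)) i"
    using longest_inc_subseq_from_iterate[OF un_predecessor[where a = a] i, unfolded m] .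
  have "width ks \<le> width jl" and "width ju \<le> width ks"
    if "inc_subseq a w ks" "length ks = m" "last ks = i" for ks
    using bounds[OF that] that jl ju by (simp_all add: width_def diff_le_mono2)
  with bounds jl ju show ?thesis
    by blast
qed

end
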